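(* Let $X$ be an abelian metric group and let $f:X\to\mathbb{R}$ be a subadditive function which is locally bounded above at some point of $X$ (i.e. bounded above on some neighbourhood of that point). Then $f$ is locally bounded at every point of $X$.
   Context: An abelian metric group is an abelian topological group whose topology is given by an invariant metric. A function $f:X\to\mathbb{R}$ is subadditive if $f(x+y)\le f(x)+f(y)$ for all $x,y\in X$. Locally bounded at a point means $|f|$ is bounded on some neighbourhood of that point. *)

theory Defs
  imports "HOL-Analysis.Analysis"
begin

definition subadditive :: "('a::plus \<Rightarrow> real) \<Rightarrow> bool" where
  "subadditive f \<longleftrightarrow> (\<forall>x y. f (x + y) \<le> f x + f y)"

definition invariant_metric :: "'a::{ab_group_add, metric_space} itself \<Rightarrow> bool" where
  "invariant_metric _ \<longleftrightarrow> (\<forall>x y z::'a. dist (x + z) (y + z) = dist x y)"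

end

theory Submission
  imports Defs
begin

text \<open>Translating the ball on which f is bounded above to any centre x costs the constant
  f (x - x0), by subadditivity. A lower bound near x comes from f x \<le> f y + f (x - y),
  where x - y ranges over a ball around 0 on which f is again bounded above.\<close>

lemma invariant_metric_dist_add_right:
  fixes a b z :: "'a::{ab_group_add, metric_space}"
  assumes "invariant_metric TYPE('a)"
  shows "dist (a + z) (b + z) = dist a b"
  using assms unfolding invariant_metric_def by blast

lemma invariant_metric_ball_translate:
  fixes x y x' :: "'a::{ab_group_add, metric_space}"
  assumes "invariant_metric TYPE('a)" and "y \<in> ball x r"
  shows "y + (x' - x) \<in> ball x' r"
proof -
  have "dist (x + (x' - x)) (y + (x' - x)) = dist x y"
    using invariant_metric_dist_add_right[OF assms(1)] .
  then show ?thesis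
    using assms(2) by simp
qed

lemma subadditive_bounded_above_ball_translate:
  fixes f :: "'a::{ab_group_add, metric_space} \<Rightarrow> real"
  assumes "invariant_metric TYPE('a)" and "subadditive f"
    and "\<forall>z\<in>ball x0 r. f z \<le> M" and "y \<in> ball x r"
  shows "f y \<le> M + f (x - x0)"
proof -
  have "f y \<le> f (y + (x0 - x)) + f (x - x0)"
    using assms(2) unfolding subadditive_def
    by (metis add_diff_cancel diff_add_cancel diff_diff_eq2)
  moreover have "f (y + (x0 - x)) \<le> M"
    using assms(3) invariant_metric_ball_translate[OF assms(1,4)] by blast
  ultimately show ?thesis
    by linarith
qed

lemma subadditive_bounded_below_ball:
  fixes f :: "'a::{ab_group_add, metric_space} \<Rightarrow> real"
  assumes "invariant_metric TYPE('a)" and "subadditive f"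
    and "\<forall>z\<in>ball x0 r. f z \<le> M" and "y \<in> ball x r"
  shows "f x - M - f (- x0) \<le> f y"
proof -
  have "f x \<le> f y + f (x - y)"
    using assms(2) unfolding subadditive_def by (metis add.commute diff_add_cancel)
  moreover have "x \<in> ball y r"
    using assms(4) by (simp add: dist_commute)
  then have "x + (0 - y) \<in> ball 0 r"
    by (rule invariant_metric_ball_translate[OF assms(1)])
  then have "f (x - y) \<le> M + f (- x0)"
    using subadditive_bounded_above_ball_translate[OF assms(1-3)] by fastforce
  ultimately show ?thesis
    by linarith
qed

theorem corollary2p3:
  fixes f :: "'a::{ab_group_add, metric_space} \<Rightarrow> real"
  assumes "invariant_metric TYPE('a)"
    and "subadditive f"
    and "\<exists>x0 U M. open U \<and> x0 \<in> U \<and> (\<forall>x\<in>U. f x \<le> M)"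
  shows "\<forall>x. \<exists>U M. open U \<and> x \<in> U \<and> (\<forall>y\<in>U. \<bar>f y\<bar> \<le> M)"
proof
  fix x :: 'a
  obtain x0 U M where "open U" "x0 \<in> U" "\<forall>z\<in>U. f z \<le> M"
    using assms(3) by blast
  then obtain r where "r > 0" and bound: "\<forall>z\<in>ball x0 r. f z \<le> M"
    by (meson openE subsetD)
  have "\<bar>f y\<bar> \<le> max \<bar>M + f (x - x0)\<bar> \<bar>f x - M - f (- x0)\<bar>" if "y \<in> ball x r" for y
    using subadditive_bounded_above_ball_translate[OF assms(1,2) bound that]
      subadditive_bounded_below_ball[OF assms(1,2) bound that]
    by linarith
  moreover have "open (ball x r)" and "x \<in> ball x r"
    using \<open>r > 0\<close> by auto
  ultimately show "\<exists>U M. open U \<and> x \<in> U \<and> (\<forall>y\<in>U. \<bar>f y\<bar> \<le> M)"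
    by blast
qed

end
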